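(* Let $G$ be a finite group. (1) Write $G/G'=\{g_0G',\ldots,g_kG'\}$ with the cosets pairwise distinct. Then for each $i\in[0,k]$ there exists $S_i\in\mathcal F(G)$ with $\pi(S_i)=g_iG'$. For any such choice of $S_0,\dots,S_k$, the set $\mathcal C=\{[S_i]:i\in[0,k]\}$ is a subgroup of $\mathcal C(\mathcal B(G),\mathcal F(G))$ and the map $G/G'\to\mathcal C$, $g_iG'\mapsto[S_i]$, is a group isomorphism (so the class semigroup contains a subgroup isomorphic to $G/G'$, the class group of the complete integral closure of $\mathcal B(G)$). Moreover, $[S\boldsymbol{\cdot}S_i]\in\mathcal C$ for every $i\in[0,k]$ and every $S\in\mathcal F(G)$. (2) The map $\mathsf Z(G)\to\mathcal C(\mathcal B(G),\mathcal F(G))^\times$, $g\mapsto[g]$, is a group isomorphism onto the group of invertible elements of the class semigroup.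
   Context: Let $G$ be a finite group written multiplicatively with identity $1_G$; $G'$ is its commutator subgroup and $\mathsf Z(G)$ its center. $\mathcal F(G)$ is the free abelian monoid with basis $G$; its elements are sequences $S=g_1\boldsymbol{\cdot}\ldots\boldsymbol{\cdot}g_\ell$ (operation $\boldsymbol{\cdot}$ = concatenation, identity the empty sequence $1_{\mathcal F(G)}$; an element $g\in G$ is also viewed as a one-term sequence). $\pi(S)=\{g_{\tau(1)}\cdots g_{\tau(\ell)}:\tau\text{ a permutation of }[1,\ell]\}$, $\pi(1_{\mathcal F(G)})=\{1_G\}$, and $\mathcal B(G)=\{S\in\mathcal F(G):1_G\in\pi(S)\}$. For $S,S'\in\mathcal F(G)$, $S\sim S'$ means: for all $T\in\mathcal F(G)$, $S\boldsymbol{\cdot}T\in\mathcal B(G)\iff S'\boldsymbol{\cdot}T\in\mathcal B(G)$; this is a congruence, $[S]$ is the class of $S$, and the class semigroup $\mathcal C(\mathcal B(G),\mathcal F(G))$ is the set of classes, written additively with $[S]+[T]=[S\boldsymbol{\cdot}T]$ and zero $[1_{\mathcal F(G)}]$. *)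

theory Defs
  imports "HOL-Algebra.Algebra" "HOL-Library.Multiset"
begin

abbreviation commutator_subgroup :: "('a, 'b) monoid_scheme \<Rightarrow> 'a set" where
  "commutator_subgroup G \<equiv> derived G (carrier G)"

definition grp_center :: "('a, 'b) monoid_scheme \<Rightarrow> 'a set" where
  "grp_center G = {z \<in> carrier G. \<forall>g \<in> carrier G. z \<otimes>\<^bsub>G\<^esub> g = g \<otimes>\<^bsub>G\<^esub> z}"

definition seqs :: "('a, 'b) monoid_scheme \<Rightarrow> 'a multiset set" where
  "seqs G = {S. set_mset S \<subseteq> carrier G}"

definition seq_prods :: "('a, 'b) monoid_scheme \<Rightarrow> 'a multiset \<Rightarrow> 'a set" where
  "seq_prods G S = {foldr (\<otimes>\<^bsub>G\<^esub>) xs \<one>\<^bsub>G\<^esub> | xs. mset xs = S}"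

definition prod_one_seqs :: "('a, 'b) monoid_scheme \<Rightarrow> 'a multiset set" where
  "prod_one_seqs G = {S \<in> seqs G. \<one>\<^bsub>G\<^esub> \<in> seq_prods G S}"

definition seq_equiv :: "('a, 'b) monoid_scheme \<Rightarrow> 'a multiset \<Rightarrow> 'a multiset \<Rightarrow> bool" where
  "seq_equiv G S S' \<longleftrightarrow> (\<forall>T \<in> seqs G. S + T \<in> prod_one_seqs G \<longleftrightarrow> S' + T \<in> prod_one_seqs G)"

definition seq_class :: "('a, 'b) monoid_scheme \<Rightarrow> 'a multiset \<Rightarrow> 'a multiset set" where
  "seq_class G S = {S' \<in> seqs G. seq_equiv G S S'}"

definition class_add :: "('a, 'b) monoid_scheme \<Rightarrow> 'a multiset set \<Rightarrow> 'a multiset set \<Rightarrow> 'a multiset set" where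
  "class_add G A B = seq_class G ((SOME s. s \<in> A) + (SOME t. t \<in> B))"

definition class_semigroup :: "('a, 'b) monoid_scheme \<Rightarrow> 'a multiset set monoid" where
  "class_semigroup G = \<lparr>carrier = seq_class G ` seqs G, monoid.mult = class_add G, one = seq_class G {#}\<rparr>"

end

theory Submission
  imports Defs
begin

text \<open>
  All ordered products of a sequence lie in a single coset of \<open>G'\<close>, since \<open>G/G'\<close> is abelian.
  If they fill a whole coset, then the products of \<open>S \<cdot> T\<close> again fill a whole coset, determined
  by that of \<open>S\<close> and any one product of \<open>T\<close>; so the class of such an \<open>S\<close> depends only on
  its coset and these classes multiply like cosets. Sequences filling a given coset exist because
  a long enough power of the sequence of all terms \<open>a, b, a\<^sup>-\<^sup>1, b\<^sup>-\<^sup>1\<close> has exactly \<open>G'\<close> as its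
  set of products (this is where finiteness enters).

  If \<open>[S]\<close> is a unit, say \<open>[S \<cdot> T] = [1]\<close>, then every ordering of \<open>S \<cdot> T\<close> has product \<open>1\<close>;
  adjoining \<open>a\<^sup>-\<^sup>1\<close> and \<open>w\<^sup>-\<^sup>1 a w\<close> for a term \<open>w\<close> then shows that \<open>w\<close> commutes with \<open>a\<close>. So \<open>S\<close>
  consists of central elements, and a central sequence is equivalent to the one-term sequence
  of its product.
\<close>

section \<open>The class semigroup\<close>

lemma carrier_class_semigroup [simp]: "carrier (class_semigroup G) = seq_class G ` seqs G"
  and mult_class_semigroup [simp]: "monoid.mult (class_semigroup G) = class_add G"
  and one_class_semigroup [simp]: "one (class_semigroup G) = seq_class G {#}"
  by (simp_all add: class_semigroup_def)

lemma seqs_add [simp]: "S + T \<in> seqs G \<longleftrightarrow> S \<in> seqs G \<and> T \<in> seqs G"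
  and seqs_add_mset [simp]: "add_mset x S \<in> seqs G \<longleftrightarrow> x \<in> carrier G \<and> S \<in> seqs G"
  and seqs_empty [simp]: "{#} \<in> seqs G"
  and mset_in_seqs_iff [simp]: "mset xs \<in> seqs G \<longleftrightarrow> set xs \<subseteq> carrier G"
  by (auto simp: seqs_def)

lemma seq_equiv_refl: "seq_equiv G S S"
  and seq_equiv_sym: "seq_equiv G S T \<Longrightarrow> seq_equiv G T S"
  and seq_equiv_trans: "seq_equiv G S T \<Longrightarrow> seq_equiv G T U \<Longrightarrow> seq_equiv G S U"
  by (simp_all add: seq_equiv_def)

lemma seq_class_eq_iff:
  assumes "S \<in> seqs G" "T \<in> seqs G"
  shows "seq_class G S = seq_class G T \<longleftrightarrow> seq_equiv G S T"
  using assms seq_equiv_refl seq_equiv_sym seq_equiv_trans unfolding seq_class_def by blast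

lemma seq_equiv_add:
  assumes "seq_equiv G S S'" "seq_equiv G T T'" "S' \<in> seqs G" "T \<in> seqs G"
  shows "seq_equiv G (S + T) (S' + T')"
  unfolding seq_equiv_def
proof
  fix U assume "U \<in> seqs G"
  then have "S + T + U \<in> prod_one_seqs G \<longleftrightarrow> S' + (T + U) \<in> prod_one_seqs G"
    using assms(1,4) by (simp add: seq_equiv_def add.assoc)
  also have "\<dots> \<longleftrightarrow> T + (S' + U) \<in> prod_one_seqs G"
    by (simp add: ac_simps)
  also have "\<dots> \<longleftrightarrow> T' + (S' + U) \<in> prod_one_seqs G"
    using assms(2,3) \<open>U \<in> seqs G\<close> by (simp add: seq_equiv_def)
  also have "\<dots> \<longleftrightarrow> S' + T' + U \<in> prod_one_seqs G"
    by (simp add: ac_simps)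
  finally show "S + T + U \<in> prod_one_seqs G \<longleftrightarrow> S' + T' + U \<in> prod_one_seqs G" .
qed

lemma class_add_seq_class:
  assumes "S \<in> seqs G" "T \<in> seqs G"
  shows "class_add G (seq_class G S) (seq_class G T) = seq_class G (S + T)"
proof -
  define S' T' where "S' = (SOME s. s \<in> seq_class G S)" and "T' = (SOME t. t \<in> seq_class G T)"
  have "S \<in> seq_class G S" "T \<in> seq_class G T"
    using assms by (simp_all add: seq_class_def seq_equiv_refl)
  then have "S' \<in> seq_class G S" "T' \<in> seq_class G T"
    unfolding S'_def T'_def by (meson someI)+
  then have "S' \<in> seqs G" "T' \<in> seqs G" "seq_equiv G S' S" "seq_equiv G T' T"
    by (simp_all add: seq_class_def seq_equiv_sym)
  then show ?thesis
    unfolding class_add_def S'_def[symmetric] T'_def[symmetric]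
    using assms by (simp add: seq_class_eq_iff seq_equiv_add)
qed

lemma seq_equivI:
  assumes "S \<in> seqs G" "S' \<in> seqs G"
    and "\<And>T. T \<in> seqs G \<Longrightarrow> seq_prods G (S + T) = seq_prods G (S' + T)"
  shows "seq_equiv G S S'"
  using assms by (simp add: seq_equiv_def prod_one_seqs_def)

section \<open>Ordered products of sequences\<close>

context group
begin

definition list_prod :: "'a list \<Rightarrow> 'a" where
  "list_prod xs = foldr (\<otimes>) xs \<one>"

lemma list_prod_Nil [simp]: "list_prod [] = \<one>"
  and list_prod_Cons [simp]: "list_prod (x # xs) = x \<otimes> list_prod xs"
  by (simp_all add: list_prod_def)

lemma list_prod_closed [simp]: "set xs \<subseteq> carrier G \<Longrightarrow> list_prod xs \<in> carrier G"
  by (induction xs) auto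

lemma list_prod_append:
  "set xs \<subseteq> carrier G \<Longrightarrow> set ys \<subseteq> carrier G \<Longrightarrow> list_prod (xs @ ys) = list_prod xs \<otimes> list_prod ys"
  by (induction xs) (auto simp: m_assoc)

lemma list_prod_mem_subgroup: "subgroup H G \<Longrightarrow> set xs \<subseteq> H \<Longrightarrow> list_prod xs \<in> H"
  by (induction xs) (simp_all add: subgroup.one_closed subgroup.m_closed)

lemma mem_seq_prods_iff: "x \<in> seq_prods G S \<longleftrightarrow> (\<exists>xs. mset xs = S \<and> x = list_prod xs)"
  by (auto simp: seq_prods_def list_prod_def)

lemma list_prod_mem_seq_prods: "list_prod xs \<in> seq_prods G (mset xs)"
  by (auto simp: mem_seq_prods_iff)

lemma seq_prods_nonempty: "\<exists>x. x \<in> seq_prods G S"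
  using ex_mset[of S] list_prod_mem_seq_prods by blast

lemma seq_prods_subset_carrier: "S \<in> seqs G \<Longrightarrow> seq_prods G S \<subseteq> carrier G"
  by (auto simp: mem_seq_prods_iff)

lemma seq_prods_empty [simp]: "seq_prods G {#} = {\<one>}"
  by (auto simp: mem_seq_prods_iff)

lemma seq_prods_singleton [simp]: "x \<in> carrier G \<Longrightarrow> seq_prods G {#x#} = {x}"
  by (auto simp: mem_seq_prods_iff)

lemma seq_prods_pair:
  assumes "a \<in> carrier G" "b \<in> carrier G"
  shows "seq_prods G {#a, b#} = {a \<otimes> b, b \<otimes> a}"
proof -
  have "mset xs = {#a, b#} \<longleftrightarrow> xs = [a, b] \<or> xs = [b, a]" for xs
  proof
    assume xs: "mset xs = {#a, b#}"
    then have "length xs = 2"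
      by (metis size_mset size_add_mset size_empty numeral_2_eq_2 One_nat_def)
    then obtain x y where "xs = [x, y]"
      by (metis (no_types, lifting) One_nat_def Suc_length_conv length_0_conv numeral_2_eq_2)
    with xs show "xs = [a, b] \<or> xs = [b, a]" by (auto simp: add_eq_conv_ex)
  qed auto
  then have "{xs. mset xs = {#a, b#}} = {[a, b], [b, a]}"
    by blast
  moreover have "seq_prods G S = list_prod ` {xs. mset xs = S}" for S
    by (auto simp: mem_seq_prods_iff)
  ultimately show ?thesis
    using assms by simp
qed

lemma mult_mem_seq_prods_add:
  assumes "S \<in> seqs G" "T \<in> seqs G" "a \<in> seq_prods G S" "b \<in> seq_prods G T"
  shows "a \<otimes> b \<in> seq_prods G (S + T)"
proof -
  obtain xs ys where "mset xs = S" "a = list_prod xs" "mset ys = T" "b = list_prod ys"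
    using assms(3,4) by (auto simp: mem_seq_prods_iff)
  with assms(1,2) have "a \<otimes> b = list_prod (xs @ ys)" "mset (xs @ ys) = S + T"
    by (auto simp: list_prod_append)
  then show ?thesis using list_prod_mem_seq_prods by metis
qed

lemma empty_mem_prod_one_seqs [simp]: "{#} \<in> prod_one_seqs G"
  by (simp add: prod_one_seqs_def)

lemma prod_one_seqs_add:
  "S \<in> prod_one_seqs G \<Longrightarrow> T \<in> prod_one_seqs G \<Longrightarrow> S + T \<in> prod_one_seqs G"
  using mult_mem_seq_prods_add[of S T \<one> \<one>] by (simp add: prod_one_seqs_def)

lemma sum_mem_prod_one_seqs:
  "finite F \<Longrightarrow> (\<And>p. p \<in> F \<Longrightarrow> f p \<in> prod_one_seqs G) \<Longrightarrow> sum f F \<in> prod_one_seqs G"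
  by (induction F rule: finite_induct) (simp_all add: prod_one_seqs_add)

lemma repeat_mset_mem_prod_one_seqs:
  "S \<in> prod_one_seqs G \<Longrightarrow> repeat_mset k S \<in> prod_one_seqs G"
  by (induction k) (simp_all add: prod_one_seqs_add)

lemma seq_prods_subset_add_prod_one:
  assumes "S \<in> prod_one_seqs G" "T \<in> seqs G"
  shows "seq_prods G T \<subseteq> seq_prods G (S + T)"
  using assms mult_mem_seq_prods_add[of S T \<one>] seq_prods_subset_carrier[OF assms(2)]
  by (force simp: prod_one_seqs_def)

end

section \<open>Sequences whose products fill a coset of the commutator subgroup\<close>

lemma mono_chain_stabilizes:
  fixes A :: "nat \<Rightarrow> 'a set"
  assumes "finite B" "\<And>k. A k \<subseteq> B" "\<And>k. A k \<subseteq> A (Suc k)"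
  shows "\<exists>m. A (Suc m) = A m"
proof (rule ccontr)
  assume "\<nexists>m. A (Suc m) = A m"
  then have "A k \<subset> A (Suc k)" for k
    using assms(3) by blast
  moreover have "finite (A k)" for k
    using assms(1,2) by (rule finite_subset[rotated])
  ultimately have "k \<le> card (A k)" for k
  proof (induction k)
    case (Suc k)
    then have "card (A k) < card (A (Suc k))"
      by (simp add: psubset_card_mono)
    with Suc show ?case
      by simp
  qed simp
  moreover have "card (A k) \<le> card B" for k
    using assms(1,2) by (rule card_mono)
  ultimately show False
    by (metis Suc_n_not_le_n le_trans)
qed

lemma (in group) generate_subset_if_mult_closed:
  assumes "A \<subseteq> carrier G" "\<one> \<in> A" "K \<subseteq> carrier G"
    and "\<And>h. h \<in> K \<Longrightarrow> inv h \<in> K" "\<And>a h. a \<in> A \<Longrightarrow> h \<in> K \<Longrightarrow> a \<otimes> h \<in> A"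
  shows "generate G K \<subseteq> A"
proof -
  have "\<forall>a\<in>A. a \<otimes> h \<in> A" if "h \<in> generate G K" for h
    using that
  proof (induction rule: generate.induct)
    case one
    then show ?case using assms(1) by auto
  next
    case (incl h)
    then show ?case using assms(5) by blast
  next
    case (inv h)
    then show ?case using assms(4,5) by blast
  next
    case (eng h1 h2)
    moreover have "h1 \<in> carrier G" "h2 \<in> carrier G"
      using eng.hyps generate_in_carrier[OF assms(3)] by auto
    ultimately show ?case
      using assms(1) by (auto simp flip: m_assoc)
  qed
  then show ?thesis
    using assms(1,2) generate_in_carrier[OF assms(3)] by (metis l_one subsetI)
qed

lemma (in normal) rcos_list_prod:
  "set xs \<subseteq> carrier G \<Longrightarrow>
    H #> list_prod xs = foldr (\<otimes>\<^bsub>G Mod H\<^esub>) (map (\<lambda>a. H #> a) xs) \<one>\<^bsub>G Mod H\<^esub>"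
  by (induction xs) (simp_all add: coset_mult_one subset flip: rcos_sum)

lemma (in normal) rcos_list_prod_perm:
  assumes "comm_group (G Mod H)" "mset xs = mset ys" "set xs \<subseteq> carrier G"
  shows "H #> list_prod xs = H #> list_prod ys"
proof -
  interpret Q: comm_group "G Mod H"
    by fact
  have "set ys \<subseteq> carrier G"
    using assms(2,3) by (metis set_mset_mset)
  moreover have "foldr (\<otimes>\<^bsub>G Mod H\<^esub>) (map (\<lambda>a. H #> a) xs) \<one>\<^bsub>G Mod H\<^esub>
      = foldr (\<otimes>\<^bsub>G Mod H\<^esub>) (map (\<lambda>a. H #> a) ys) \<one>\<^bsub>G Mod H\<^esub>"
    by (rule Q.multlist_perm_cong) (use assms(2,3) in \<open>auto simp: carrier_FactGroup\<close>)
  ultimately show ?thesis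
    using assms(3) by (simp only: rcos_list_prod)
qed

context group
begin

lemma commutator_subgroup_is_subgroup: "subgroup (commutator_subgroup G) G"
  by (simp add: derived_is_subgroup)

lemma seq_prods_subset_rcos:
  assumes "S \<in> seqs G" "x \<in> seq_prods G S"
  shows "seq_prods G S \<subseteq> commutator_subgroup G #> x"
proof
  fix y assume "y \<in> seq_prods G S"
  with assms obtain xs ys where "mset xs = S" "x = list_prod xs" "mset ys = S" "y = list_prod ys"
    by (auto simp: mem_seq_prods_iff)
  moreover from this assms(1) have "set xs \<subseteq> carrier G" "set ys \<subseteq> carrier G"
    by (metis mset_in_seqs_iff)+
  ultimately have "commutator_subgroup G #> y = commutator_subgroup G #> x" "y \<in> carrier G"
    using normal.rcos_list_prod_perm[OF derived_self_is_normal derived_quot_is_comm_group, of ys xs]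
    by simp_all
  then show "y \<in> commutator_subgroup G #> x"
    by (metis rcos_self commutator_subgroup_is_subgroup)
qed

lemma one_mem_rcos_iff:
  assumes "subgroup H G" "x \<in> carrier G"
  shows "\<one> \<in> H #> x \<longleftrightarrow> x \<in> H"
  using subgroup.rcos_module[OF assms(1) is_group assms(2) one_closed] assms
  by (metis inv_inv l_one inv_closed subgroup.m_inv_closed)

lemma seq_prods_add_full_rcos:
  assumes "S \<in> seqs G" "T \<in> seqs G" "g \<in> carrier G"
    and S: "seq_prods G S = commutator_subgroup G #> g" and t: "t \<in> seq_prods G T"
  shows "seq_prods G (S + T) = commutator_subgroup G #> (g \<otimes> t)"
proof
  have "t \<in> carrier G"
    using assms(2) t seq_prods_subset_carrier by blast
  have "g \<in> seq_prods G S"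
    using S assms(3) by (simp add: rcos_self commutator_subgroup_is_subgroup)
  then have "g \<otimes> t \<in> seq_prods G (S + T)"
    by (rule mult_mem_seq_prods_add[OF assms(1,2) _ t])
  with assms(1,2) show "seq_prods G (S + T) \<subseteq> commutator_subgroup G #> (g \<otimes> t)"
    by (simp add: seq_prods_subset_rcos)
  show "commutator_subgroup G #> (g \<otimes> t) \<subseteq> seq_prods G (S + T)"
  proof
    fix y assume "y \<in> commutator_subgroup G #> (g \<otimes> t)"
    then obtain d where d: "d \<in> commutator_subgroup G" "y = d \<otimes> (g \<otimes> t)"
      by (auto simp: r_coset_def)
    then have "d \<otimes> g \<in> seq_prods G S"
      using S by (auto simp: r_coset_def)
    then have "d \<otimes> g \<otimes> t \<in> seq_prods G (S + T)"
      by (rule mult_mem_seq_prods_add[OF assms(1,2) _ t])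
    moreover have "d \<in> carrier G"
      using commutator_subgroup_is_subgroup d(1) by (rule subgroup.mem_carrier)
    ultimately show "y \<in> seq_prods G (S + T)"
      using d(2) assms(3) \<open>t \<in> carrier G\<close> by (simp add: m_assoc)
  qed
qed

lemma prod_one_seqs_add_full_rcos_iff:
  assumes "S \<in> seqs G" "T \<in> seqs G" "g \<in> carrier G"
    and "seq_prods G S = commutator_subgroup G #> g" "t \<in> seq_prods G T"
  shows "S + T \<in> prod_one_seqs G \<longleftrightarrow> g \<otimes> t \<in> commutator_subgroup G"
proof -
  have "t \<in> carrier G"
    using assms(2,5) seq_prods_subset_carrier by blast
  then show ?thesis
    using assms by (simp add: prod_one_seqs_def seq_prods_add_full_rcos one_mem_rcos_iff commutator_subgroup_is_subgroup)
qed

lemma seq_equiv_iff_full_rcos: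
  assumes "S \<in> seqs G" "S' \<in> seqs G"
    and "seq_prods G S \<in> rcosets (commutator_subgroup G)"
    and "seq_prods G S' \<in> rcosets (commutator_subgroup G)"
  shows "seq_equiv G S S' \<longleftrightarrow> seq_prods G S = seq_prods G S'"
proof -
  obtain g g' where g: "g \<in> carrier G" "seq_prods G S = commutator_subgroup G #> g"
    and g': "g' \<in> carrier G" "seq_prods G S' = commutator_subgroup G #> g'"
    using assms(3,4) by (auto simp: RCOSETS_def)
  show ?thesis
  proof
    assume equiv: "seq_equiv G S S'"
    have inv_g: "{#inv g#} \<in> seqs G" "inv g \<in> seq_prods G {#inv g#}"
      using g(1) by simp_all
    have "g \<otimes> inv g \<in> commutator_subgroup G"
      using g(1) commutator_subgroup_is_subgroup subgroup.one_closed by fastforce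
    then have "S + {#inv g#} \<in> prod_one_seqs G"
      using prod_one_seqs_add_full_rcos_iff[OF assms(1) inv_g(1) g inv_g(2)] by blast
    then have "S' + {#inv g#} \<in> prod_one_seqs G"
      using equiv inv_g(1) unfolding seq_equiv_def by blast
    then have "g' \<otimes> inv g \<in> commutator_subgroup G"
      using prod_one_seqs_add_full_rcos_iff[OF assms(2) inv_g(1) g' inv_g(2)] by blast
    then have "g' \<in> commutator_subgroup G #> g"
      by (rule subgroup.rcos_module_rev[OF commutator_subgroup_is_subgroup is_group g(1) g'(1)])
    then show "seq_prods G S = seq_prods G S'"
      using repr_independence[OF _ g(1) commutator_subgroup_is_subgroup] g(2) g'(2) by simp
  next
    assume eq: "seq_prods G S = seq_prods G S'"
    show "seq_equiv G S S'"
    proof (rule seq_equivI[OF assms(1,2)])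
      fix T assume T: "T \<in> seqs G"
      obtain t where t: "t \<in> seq_prods G T"
        using seq_prods_nonempty by blast
      show "seq_prods G (S + T) = seq_prods G (S' + T)"
        using seq_prods_add_full_rcos[OF assms(1) T g t] seq_prods_add_full_rcos[OF assms(2) T g(1) _ t]
          eq g(2) by simp
    qed
  qed
qed

lemma seq_prods_add_mem_rcosets:
  assumes "S \<in> seqs G" "T \<in> seqs G" "seq_prods G S \<in> rcosets (commutator_subgroup G)"
  shows "seq_prods G (S + T) \<in> rcosets (commutator_subgroup G)"
proof -
  obtain g where "g \<in> carrier G" "seq_prods G S = commutator_subgroup G #> g"
    using assms(3) by (auto simp: RCOSETS_def)
  moreover obtain t where "t \<in> seq_prods G T"
    using seq_prods_nonempty by blast
  moreover have "t \<in> carrier G"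
    using assms(2) calculation(3) seq_prods_subset_carrier by blast
  ultimately show ?thesis
    using assms(1,2) commutator_subgroup_is_subgroup
    by (simp add: seq_prods_add_full_rcos rcosetsI subgroup.subset)
qed

lemma seq_prods_add_rcosets:
  assumes "S \<in> seqs G" "T \<in> seqs G"
    and "seq_prods G S \<in> rcosets (commutator_subgroup G)"
    and "seq_prods G T \<in> rcosets (commutator_subgroup G)"
  shows "seq_prods G (S + T) = seq_prods G S <#> seq_prods G T"
proof -
  interpret N: normal "commutator_subgroup G" G
    by (rule derived_self_is_normal)
  obtain g h where g: "g \<in> carrier G" "seq_prods G S = commutator_subgroup G #> g"
    and h: "h \<in> carrier G" "seq_prods G T = commutator_subgroup G #> h"
    using assms(3,4) by (auto simp: RCOSETS_def)
  then have "h \<in> seq_prods G T"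
    by (simp add: rcos_self commutator_subgroup_is_subgroup)
  then show ?thesis
    using seq_prods_add_full_rcos[OF assms(1,2) g] g h by (simp add: N.rcos_sum)
qed

lemma inv_mem_derived_set:
  assumes "h \<in> derived_set G (carrier G)"
  shows "inv h \<in> derived_set G (carrier G)"
proof -
  obtain a b where ab: "a \<in> carrier G" "b \<in> carrier G" "h = a \<otimes> b \<otimes> inv a \<otimes> inv b"
    using assms by blast
  then have "inv h = b \<otimes> a \<otimes> inv b \<otimes> inv a"
    by (simp add: inv_mult_group m_assoc)
  with ab(1,2) show ?thesis
    by blast
qed

definition commutators_seq :: "'a multiset" where
  "commutators_seq = (\<Sum>(a, b) \<in> carrier G \<times> carrier G. {#a, b, inv a, inv b#})"

lemma commutator_seq_mem_prod_one_seqs: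
  assumes "a \<in> carrier G" "b \<in> carrier G"
  shows "{#a, b, inv a, inv b#} \<in> prod_one_seqs G"
proof -
  have "mset [a, inv a, b, inv b] = {#a, b, inv a, inv b#}"
    by (simp add: add_mset_commute)
  moreover have "list_prod [a, inv a, b, inv b] = \<one>"
    using assms by (simp flip: m_assoc)
  ultimately have "\<one> \<in> seq_prods G {#a, b, inv a, inv b#}"
    using list_prod_mem_seq_prods[of "[a, inv a, b, inv b]"] by argo
  then show ?thesis
    using assms by (simp add: prod_one_seqs_def)
qed

lemma commutators_seq_mem_prod_one_seqs:
  "finite (carrier G) \<Longrightarrow> commutators_seq \<in> prod_one_seqs G"
  unfolding commutators_seq_def
  by (rule sum_mem_prod_one_seqs) (auto intro: commutator_seq_mem_prod_one_seqs)

lemma derived_set_subset_seq_prods_commutators_seq: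
  assumes "finite (carrier G)"
  shows "derived_set G (carrier G) \<subseteq> seq_prods G commutators_seq"
proof
  fix h assume "h \<in> derived_set G (carrier G)"
  then obtain a b where ab: "a \<in> carrier G" "b \<in> carrier G" "h = a \<otimes> b \<otimes> inv a \<otimes> inv b"
    by blast
  define R where "R = (\<Sum>(a, b) \<in> carrier G \<times> carrier G - {(a, b)}. {#a, b, inv a, inv b#})"
  have split: "commutators_seq = R + {#a, b, inv a, inv b#}"
    unfolding commutators_seq_def R_def using assms ab(1,2)
    by (subst sum.remove[of _ "(a, b)"]) (simp_all add: add.commute)
  have "R \<in> prod_one_seqs G"
    unfolding R_def using assms
    by (intro sum_mem_prod_one_seqs) (auto intro: commutator_seq_mem_prod_one_seqs)
  moreover have "{#a, b, inv a, inv b#} \<in> seqs G"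
    using ab(1,2) by simp
  moreover have "h \<in> seq_prods G {#a, b, inv a, inv b#}"
    using list_prod_mem_seq_prods[of "[a, b, inv a, inv b]"] ab by (simp add: m_assoc)
  ultimately show "h \<in> seq_prods G commutators_seq"
    unfolding split using seq_prods_subset_add_prod_one by blast
qed

lemma exists_seq_prods_eq_commutator_subgroup:
  assumes "finite (carrier G)"
  shows "\<exists>S \<in> seqs G. seq_prods G S = commutator_subgroup G"
proof -
  define A where "A k = seq_prods G (repeat_mset k commutators_seq)" for k
  have W: "commutators_seq \<in> prod_one_seqs G"
    using assms by (rule commutators_seq_mem_prod_one_seqs)
  then have powers: "repeat_mset k commutators_seq \<in> prod_one_seqs G" for k
    by (rule repeat_mset_mem_prod_one_seqs)
  then have A_subset: "A k \<subseteq> commutator_subgroup G" for k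
    using seq_prods_subset_rcos[of _ \<one>] commutator_subgroup_is_subgroup
    by (simp add: A_def prod_one_seqs_def coset_mult_one subgroup.subset)
  moreover have "A k \<subseteq> A (Suc k)" for k
    using seq_prods_subset_add_prod_one[OF W] powers by (simp add: A_def prod_one_seqs_def)
  moreover have "finite (commutator_subgroup G)"
    using assms commutator_subgroup_is_subgroup finite_subset subgroup.subset by blast
  ultimately obtain m where m: "A (Suc m) = A m"
    using mono_chain_stabilizes by metis
  \<comment> \<open>The stable product set is closed under right multiplication by commutators.\<close>
  have "commutator_subgroup G \<subseteq> A m"
    unfolding derived_def
  proof (rule generate_subset_if_mult_closed)
    show "A m \<subseteq> carrier G" "\<one> \<in> A m"
      using A_subset[of m] commutator_subgroup_is_subgroup powers[of m]
      by (auto simp: A_def prod_one_seqs_def dest: subgroup.mem_carrier)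
    show "derived_set G (carrier G) \<subseteq> carrier G"
      by (simp add: derived_set_in_carrier)
    show "inv h \<in> derived_set G (carrier G)" if "h \<in> derived_set G (carrier G)" for h
      using that by (rule inv_mem_derived_set)
    show "a \<otimes> h \<in> A m" if "a \<in> A m" "h \<in> derived_set G (carrier G)" for a h
    proof -
      have "a \<otimes> h \<in> seq_prods G (repeat_mset m commutators_seq + commutators_seq)"
        using that derived_set_subset_seq_prods_commutators_seq[OF assms] powers W
        by (intro mult_mem_seq_prods_add) (auto simp: A_def prod_one_seqs_def)
      then show ?thesis
        using m by (simp add: A_def add.commute)
    qed
  qed
  then have "seq_prods G (repeat_mset m commutators_seq) = commutator_subgroup G"
    using A_subset[of m] by (simp add: A_def)
  then show ?thesis
    using powers[of m] by (auto simp: prod_one_seqs_def)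
qed

lemma exists_seq_prods_eq_rcos:
  assumes "finite (carrier G)" "g \<in> carrier G"
  shows "\<exists>S \<in> seqs G. seq_prods G S = commutator_subgroup G #> g"
proof -
  obtain S where S: "S \<in> seqs G" "seq_prods G S = commutator_subgroup G"
    using exists_seq_prods_eq_commutator_subgroup[OF assms(1)] by blast
  then have "seq_prods G S = commutator_subgroup G #> \<one>"
    using commutator_subgroup_is_subgroup by (simp add: coset_mult_one subgroup.subset)
  then have "seq_prods G (S + {#g#}) = commutator_subgroup G #> (\<one> \<otimes> g)"
    using S(1) assms(2) by (intro seq_prods_add_full_rcos) simp_all
  then show ?thesis
    using S(1) assms(2) by (intro bexI[of _ "S + {#g#}"]) simp_all
qed

context
  fixes sf :: "'a set \<Rightarrow> 'a multiset"
  assumes sf_section: "\<forall>c \<in> carrier (G Mod commutator_subgroup G). sf c \<in> seqs G \<and> seq_prods G (sf c) = c"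
begin

lemma seq_class_eq_section:
  assumes "S \<in> seqs G" "seq_prods G S \<in> rcosets (commutator_subgroup G)"
  shows "seq_class G S = seq_class G (sf (seq_prods G S))"
  using sf_section assms by (simp add: seq_class_eq_iff seq_equiv_iff_full_rcos FactGroup_def)

lemma section_class_hom:
  "(\<lambda>c. seq_class G (sf c)) \<in> hom (G Mod commutator_subgroup G)
     \<lparr>carrier = (\<lambda>c. seq_class G (sf c)) ` carrier (G Mod commutator_subgroup G),
      monoid.mult = class_add G, one = U\<rparr>"
proof (rule homI, goal_cases)
  case (2 c c')
  with sf_section have c: "sf c \<in> seqs G" "seq_prods G (sf c) \<in> rcosets (commutator_subgroup G)"
    and c': "sf c' \<in> seqs G" "seq_prods G (sf c') \<in> rcosets (commutator_subgroup G)"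
    and prods: "seq_prods G (sf c) = c" "seq_prods G (sf c') = c'"
    by (simp_all add: FactGroup_def)
  have "class_add G (seq_class G (sf c)) (seq_class G (sf c')) = seq_class G (sf c + sf c')"
    using c(1) c'(1) by (rule class_add_seq_class)
  also have "\<dots> = seq_class G (sf (seq_prods G (sf c + sf c')))"
    using c c' by (simp add: seq_class_eq_section seq_prods_add_mem_rcosets)
  also have "\<dots> = seq_class G (sf (c <#> c'))"
    using c c' prods by (simp add: seq_prods_add_rcosets)
  finally show ?case
    by (simp add: FactGroup_def)
qed simp

lemma section_class_inj:
  "inj_on (\<lambda>c. seq_class G (sf c)) (carrier (G Mod commutator_subgroup G))"
proof (rule inj_onI)
  fix c c' assume "c \<in> carrier (G Mod commutator_subgroup G)" "c' \<in> carrier (G Mod commutator_subgroup G)"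
    and "seq_class G (sf c) = seq_class G (sf c')"
  with sf_section show "c = c'"
    by (simp add: seq_class_eq_iff seq_equiv_iff_full_rcos FactGroup_def)
qed

lemma seq_class_add_section_mem:
  assumes "c \<in> carrier (G Mod commutator_subgroup G)" "S \<in> seqs G"
  shows "seq_class G (S + sf c) \<in> (\<lambda>c. seq_class G (sf c)) ` carrier (G Mod commutator_subgroup G)"
proof -
  have "sf c \<in> seqs G" "seq_prods G (sf c) \<in> rcosets (commutator_subgroup G)"
    using sf_section assms(1) by (simp_all add: FactGroup_def)
  then have "seq_prods G (sf c + S) \<in> rcosets (commutator_subgroup G)"
    using assms(2) by (intro seq_prods_add_mem_rcosets)
  then have rcos: "seq_prods G (S + sf c) \<in> rcosets (commutator_subgroup G)"
    by (simp add: add.commute)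
  then have "seq_class G (S + sf c) = seq_class G (sf (seq_prods G (S + sf c)))"
    using \<open>sf c \<in> seqs G\<close> assms(2) by (intro seq_class_eq_section) simp_all
  with rcos show ?thesis
    by (simp add: FactGroup_def)
qed

lemma class_semigroup_section_subgroup:
  defines "cl \<equiv> (\<lambda>c. seq_class G (sf c)) ` carrier (G Mod commutator_subgroup G)"
    and "H \<equiv> \<lparr>carrier = (\<lambda>c. seq_class G (sf c)) ` carrier (G Mod commutator_subgroup G),
      monoid.mult = class_add G, one = seq_class G (sf (commutator_subgroup G))\<rparr>"
  shows "cl \<subseteq> carrier (class_semigroup G)" "group H"
    "(\<lambda>c. seq_class G (sf c)) \<in> iso (G Mod commutator_subgroup G) H"
    "\<forall>c \<in> carrier (G Mod commutator_subgroup G). \<forall>S \<in> seqs G. seq_class G (S + sf c) \<in> cl"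
proof -
  interpret Q: group "G Mod commutator_subgroup G"
    by (rule derived_quot_is_group)
  have hom: "(\<lambda>c. seq_class G (sf c)) \<in> hom (G Mod commutator_subgroup G) H"
    unfolding H_def by (rule section_class_hom)
  show "cl \<subseteq> carrier (class_semigroup G)"
    using sf_section unfolding cl_def by auto
  show "group H"
    using Q.hom_imp_img_group[OF hom] by (simp add: H_def)
  show "(\<lambda>c. seq_class G (sf c)) \<in> iso (G Mod commutator_subgroup G) H"
    using hom section_class_inj by (intro isoI) (simp_all add: bij_betw_def H_def)
  show "\<forall>c \<in> carrier (G Mod commutator_subgroup G). \<forall>S \<in> seqs G. seq_class G (S + sf c) \<in> cl"
    unfolding cl_def using seq_class_add_section_mem by blast
qed

end

section \<open>Central sequences and the units of the class semigroup\<close>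

text \<open>
  Unfolding \<open>grp_center_def\<close> under the simplifier makes it loop on \<open>z \<otimes> z\<close>;
  the two rules below are used instead.
\<close>

lemma grp_centerI:
  "z \<in> carrier G \<Longrightarrow> (\<And>g. g \<in> carrier G \<Longrightarrow> z \<otimes> g = g \<otimes> z) \<Longrightarrow> z \<in> grp_center G"
  unfolding grp_center_def by blast

lemma grp_centerD:
  assumes "z \<in> grp_center G"
  shows "z \<in> carrier G" "g \<in> carrier G \<Longrightarrow> z \<otimes> g = g \<otimes> z"
  using assms unfolding grp_center_def by blast+

lemma grp_center_is_subgroup: "subgroup (grp_center G) G"
proof (rule subgroupI)
  show "grp_center G \<subseteq> carrier G" "grp_center G \<noteq> {}"
    using grp_centerD(1) grp_centerI[OF one_closed] by auto
next
  fix z assume z: "z \<in> grp_center G"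
  show "inv z \<in> grp_center G"
  proof (rule grp_centerI)
    fix g assume g: "g \<in> carrier G"
    have zc: "z \<in> carrier G"
      using z by (rule grp_centerD)
    have "inv z \<otimes> g = inv z \<otimes> (g \<otimes> z) \<otimes> inv z"
      using zc g by (simp add: m_assoc)
    also have "\<dots> = g \<otimes> inv z"
      unfolding grp_centerD(2)[OF z g, symmetric] using zc g by (simp flip: m_assoc)
    finally show "inv z \<otimes> g = g \<otimes> inv z" .
  qed (use z grp_centerD in simp)
next
  fix z w assume z: "z \<in> grp_center G" and w: "w \<in> grp_center G"
  show "z \<otimes> w \<in> grp_center G"
  proof (rule grp_centerI)
    fix g assume g: "g \<in> carrier G"
    have zc: "z \<in> carrier G" and wc: "w \<in> carrier G"
      using z w by (simp_all add: grp_centerD)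
    have "z \<otimes> w \<otimes> g = z \<otimes> (g \<otimes> w)"
      using zc wc g by (simp add: m_assoc grp_centerD(2)[OF w g])
    also have "\<dots> = g \<otimes> (z \<otimes> w)"
      using zc wc g by (simp add: grp_centerD(2)[OF z g] flip: m_assoc)
    finally show "z \<otimes> w \<otimes> g = g \<otimes> (z \<otimes> w)" .
  qed (use z w grp_centerD in simp)
qed

lemma seq_prods_add_mset_central:
  assumes z: "z \<in> grp_center G" and T: "T \<in> seqs G"
  shows "seq_prods G (add_mset z T) = (\<lambda>x. z \<otimes> x) ` seq_prods G T"
proof
  show "(\<lambda>x. z \<otimes> x) ` seq_prods G T \<subseteq> seq_prods G (add_mset z T)"
  proof (rule image_subsetI)
    fix x assume "x \<in> seq_prods G T"
    then obtain xs where "mset xs = T" "x = list_prod xs"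
      by (auto simp: mem_seq_prods_iff)
    then show "z \<otimes> x \<in> seq_prods G (add_mset z T)"
      using list_prod_mem_seq_prods[of "z # xs"] by simp
  qed
  show "seq_prods G (add_mset z T) \<subseteq> (\<lambda>x. z \<otimes> x) ` seq_prods G T"
  proof
    fix y assume "y \<in> seq_prods G (add_mset z T)"
    then obtain ys where ys: "mset ys = add_mset z T" "y = list_prod ys"
      by (auto simp: mem_seq_prods_iff)
    then have "z \<in> set ys"
      by (metis set_mset_mset union_single_eq_member)
    then obtain ys1 ys2 where split: "ys = ys1 @ z # ys2"
      by (meson split_list)
    then have T_eq: "mset (ys1 @ ys2) = T"
      using ys(1) by simp
    then have "set ys1 \<subseteq> carrier G" "set ys2 \<subseteq> carrier G" "z \<in> carrier G"
      using T grp_centerD(1)[OF z] by auto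
    moreover have "list_prod ys1 \<otimes> z = z \<otimes> list_prod ys1"
      using grp_centerD(2)[OF z] calculation by simp
    ultimately have "y = z \<otimes> list_prod (ys1 @ ys2)"
      using ys(2) split by (simp add: list_prod_append flip: m_assoc)
    then show "y \<in> (\<lambda>x. z \<otimes> x) ` seq_prods G T"
      using T_eq list_prod_mem_seq_prods by blast
  qed
qed

lemma seq_prods_add_central:
  assumes "set_mset S \<subseteq> grp_center G" "T \<in> seqs G" "g \<in> seq_prods G S"
  shows "seq_prods G (S + T) = (\<lambda>x. g \<otimes> x) ` seq_prods G T"
  using assms
proof (induction S arbitrary: g)
  case empty
  then show ?case
    using seq_prods_subset_carrier[OF empty.prems(2)] by (force simp: image_iff)
next
  case (add z S)
  have z: "z \<in> grp_center G" "z \<in> carrier G" and S: "S \<in> seqs G"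
    using add.prems(1) grp_centerD(1) by (auto simp: seqs_def)
  then obtain g' where g': "g' \<in> seq_prods G S" "g = z \<otimes> g'"
    using add.prems(3) seq_prods_add_mset_central by blast
  then have "g' \<in> carrier G"
    using S seq_prods_subset_carrier by blast
  have "seq_prods G (add_mset z S + T) = (\<lambda>x. z \<otimes> x) ` seq_prods G (S + T)"
    using z(1) S add.prems(2) by (simp add: seq_prods_add_mset_central)
  also have "\<dots> = (\<lambda>x. z \<otimes> (g' \<otimes> x)) ` seq_prods G T"
    using add.IH add.prems g' by (simp add: image_image)
  also have "\<dots> = (\<lambda>x. g \<otimes> x) ` seq_prods G T"
    using seq_prods_subset_carrier[OF add.prems(2)] z(2) \<open>g' \<in> carrier G\<close> g'(2)
    by (intro image_cong) (auto simp: m_assoc)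
  finally show ?case .
qed

lemma seq_equiv_central:
  assumes "set_mset S \<subseteq> grp_center G" "set_mset S' \<subseteq> grp_center G"
    and "g \<in> seq_prods G S" "g \<in> seq_prods G S'"
  shows "seq_equiv G S S'"
proof (rule seq_equivI)
  show "S \<in> seqs G" "S' \<in> seqs G"
    using assms(1,2) grp_centerD(1) by (auto simp: seqs_def)
  show "seq_prods G (S + T) = seq_prods G (S' + T)" if "T \<in> seqs G" for T
    using assms that by (simp add: seq_prods_add_central)
qed

lemma seq_class_singleton_eq_iff:
  assumes "a \<in> carrier G" "b \<in> carrier G"
  shows "seq_class G {#a#} = seq_class G {#b#} \<longleftrightarrow> a = b"
proof
  assume "seq_class G {#a#} = seq_class G {#b#}"
  then have "seq_equiv G {#a#} {#b#}"
    using assms by (simp add: seq_class_eq_iff)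
  moreover have "{#a#} + {#inv a#} \<in> prod_one_seqs G"
    using assms by (simp add: prod_one_seqs_def seq_prods_pair)
  ultimately have "{#b#} + {#inv a#} \<in> prod_one_seqs G"
    using assms(1) unfolding seq_equiv_def by (meson inv_closed seqs_add_mset seqs_empty)
  then have "\<one> = b \<otimes> inv a \<or> \<one> = inv a \<otimes> b"
    using assms by (simp add: prod_one_seqs_def seq_prods_pair) blast
  then show "a = b"
    using assms by (metis inv_closed inv_equality inv_inv inv_comm)
qed simp

lemma seq_class_singleton_mult:
  assumes "z \<in> grp_center G" "w \<in> grp_center G"
  shows "seq_class G {#z \<otimes> w#} = class_add G (seq_class G {#z#}) (seq_class G {#w#})"
proof -
  have zw: "z \<in> carrier G" "w \<in> carrier G"
    using assms by (simp_all add: grp_centerD)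
  have "seq_equiv G {#z \<otimes> w#} ({#z#} + {#w#})"
    using assms zw subgroup.m_closed[OF grp_center_is_subgroup assms]
    by (intro seq_equiv_central) (auto simp: seq_prods_pair)
  then show ?thesis
    using zw by (simp add: class_add_seq_class seq_class_eq_iff)
qed

lemma seq_class_singleton_mem_Units:
  assumes "z \<in> grp_center G"
  shows "seq_class G {#z#} \<in> Units (class_semigroup G)"
proof -
  have zc: "z \<in> carrier G" and "inv z \<in> grp_center G"
    using assms grp_centerD(1) subgroup.m_inv_closed[OF grp_center_is_subgroup] by auto
  then have "seq_equiv G ({#z#} + {#inv z#}) {#}" "seq_equiv G ({#inv z#} + {#z#}) {#}"
    using assms by (intro seq_equiv_central; simp add: seq_prods_pair)+
  then show ?thesis
    using zc unfolding Units_def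
    by (auto simp: class_add_seq_class seq_class_eq_iff intro!: bexI[of _ "seq_class G {#inv z#}"])
qed

lemma seq_prods_eq_one_if_equiv_empty:
  assumes "W \<in> seqs G" "seq_equiv G W {#}"
  shows "seq_prods G W = {\<one>}"
proof -
  have "y = \<one>" if y: "y \<in> seq_prods G W" for y
  proof -
    have yc: "y \<in> carrier G"
      using assms(1) y seq_prods_subset_carrier by blast
    then have "y \<otimes> inv y \<in> seq_prods G (W + {#inv y#})"
      using assms(1) y by (intro mult_mem_seq_prods_add) simp_all
    then have "W + {#inv y#} \<in> prod_one_seqs G"
      using assms(1) yc by (simp add: prod_one_seqs_def)
    then have "{#inv y#} \<in> prod_one_seqs G"
      using assms(2) yc unfolding seq_equiv_def by (metis add_0 inv_closed seqs_add_mset seqs_empty)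
    then show "y = \<one>"
      using yc by (simp add: prod_one_seqs_def) (metis inv_inv inv_one)
  qed
  then show ?thesis
    using seq_prods_nonempty by blast
qed

lemma commute_if_equiv_empty:
  assumes W: "W \<in> seqs G" and equiv: "seq_equiv G W {#}"
    and vs: "mset (w # vs) = W" and a: "a \<in> carrier G"
  shows "w \<otimes> a = a \<otimes> w"
proof -
  have wc: "w \<in> carrier G" and vsc: "set vs \<subseteq> carrier G"
    using W vs by auto
  have "w \<otimes> list_prod vs = \<one>"
    using seq_prods_eq_one_if_equiv_empty[OF W equiv] list_prod_mem_seq_prods[of "w # vs"] vs by simp
  then have prod_vs: "list_prod vs = inv w"
    using wc vsc by (metis inv_equality inv_comm list_prod_closed)
  \<comment> \<open>Some ordering of \<open>W + {#inv a, b#}\<close> has product \<open>1\<close>, hence so does one of \<open>{#inv a, b#}\<close>.\<close>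
  define b where "b = inv w \<otimes> a \<otimes> w"
  have bc: "b \<in> carrier G"
    using a wc by (simp add: b_def)
  have cancel: "w \<otimes> (inv w \<otimes> a) = a"
    using a wc by (simp flip: m_assoc)
  have "mset ([inv a, w, b] @ vs) = W + {#inv a, b#}"
    using vs by (auto simp: add_mset_commute)
  moreover have "list_prod ([inv a, w, b] @ vs) = \<one>"
    using a wc vsc by (simp add: list_prod_append prod_vs b_def m_assoc cancel)
  ultimately have "\<one> \<in> seq_prods G (W + {#inv a, b#})"
    using list_prod_mem_seq_prods by metis
  then have "W + {#inv a, b#} \<in> prod_one_seqs G"
    using W a bc by (simp add: prod_one_seqs_def)
  then have "{#inv a, b#} \<in> prod_one_seqs G"
    using equiv a bc unfolding seq_equiv_def by (metis add_0 inv_closed seqs_add_mset seqs_empty)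
  then have "\<one> = inv a \<otimes> b \<or> \<one> = b \<otimes> inv a"
    using a bc by (simp add: prod_one_seqs_def seq_prods_pair)
  then have "b = a"
    using a bc by (metis inv_closed inv_equality inv_inv inv_comm)
  moreover have "w \<otimes> b = a \<otimes> w"
    using a wc by (simp add: b_def flip: m_assoc)
  ultimately show "w \<otimes> a = a \<otimes> w"
    by simp
qed

lemma set_mset_subset_center_if_equiv_empty:
  assumes "W \<in> seqs G" "seq_equiv G W {#}"
  shows "set_mset W \<subseteq> grp_center G"
proof
  fix w assume "w \<in># W"
  then obtain V where "W = add_mset w V"
    by (meson multi_member_split)
  moreover obtain vs where "mset vs = V"
    using ex_mset by blast
  ultimately have "mset (w # vs) = W"
    by simp
  then show "w \<in> grp_center G"
    using assms commute_if_equiv_empty by (intro grp_centerI) auto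
qed

lemma Units_class_semigroup:
  "Units (class_semigroup G) = (\<lambda>z. seq_class G {#z#}) ` grp_center G"
proof
  show "(\<lambda>z. seq_class G {#z#}) ` grp_center G \<subseteq> Units (class_semigroup G)"
    using seq_class_singleton_mem_Units by blast
  show "Units (class_semigroup G) \<subseteq> (\<lambda>z. seq_class G {#z#}) ` grp_center G"
  proof
    fix A assume "A \<in> Units (class_semigroup G)"
    then obtain S T where S: "S \<in> seqs G" "A = seq_class G S" and T: "T \<in> seqs G"
      and "class_add G A (seq_class G T) = seq_class G {#}"
      unfolding Units_def by auto
    then have "seq_equiv G (S + T) {#}"
      by (simp add: class_add_seq_class seq_class_eq_iff)
    then have central: "set_mset S \<subseteq> grp_center G"
      using set_mset_subset_center_if_equiv_empty[of "S + T"] S(1) T by auto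
    obtain xs where xs: "mset xs = S"
      using ex_mset by blast
    then have g: "list_prod xs \<in> grp_center G"
      using central grp_center_is_subgroup by (auto intro: list_prod_mem_subgroup)
    then have "seq_equiv G S {#list_prod xs#}"
      using central xs list_prod_mem_seq_prods grp_centerD(1)
      by (intro seq_equiv_central) auto
    then have "A = seq_class G {#list_prod xs#}"
      using S g grp_centerD(1) by (simp add: seq_class_eq_iff)
    with g show "A \<in> (\<lambda>z. seq_class G {#z#}) ` grp_center G"
      by blast
  qed
qed

lemma seq_class_singleton_iso:
  "(\<lambda>g. seq_class G {#g#}) \<in> iso (G\<lparr>carrier := grp_center G\<rparr>) (units_of (class_semigroup G))"
proof (rule isoI)
  show "(\<lambda>g. seq_class G {#g#}) \<in> hom (G\<lparr>carrier := grp_center G\<rparr>) (units_of (class_semigroup G))"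
    by (rule homI) (simp_all add: units_of_def seq_class_singleton_mem_Units seq_class_singleton_mult)
  have "inj_on (\<lambda>g. seq_class G {#g#}) (grp_center G)"
    by (rule inj_onI) (simp add: seq_class_singleton_eq_iff grp_centerD(1))
  then show "bij_betw (\<lambda>g. seq_class G {#g#}) (carrier (G\<lparr>carrier := grp_center G\<rparr>))
      (carrier (units_of (class_semigroup G)))"
    by (simp add: bij_betw_def units_of_def Units_class_semigroup)
qed

end

theorem theorem3p8:
  fixes G :: "('a, 'b) monoid_scheme"
  assumes "group G" and "finite (carrier G)"
  shows "(\<forall>c \<in> carrier (G Mod commutator_subgroup G). \<exists>s \<in> seqs G. seq_prods G s = c)
    \<and> (\<forall>sf. (\<forall>c \<in> carrier (G Mod commutator_subgroup G).
                 sf c \<in> seqs G \<and> seq_prods G (sf c) = c) \<longrightarrow>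
          (let cl = (\<lambda>c. seq_class G (sf c)) ` carrier (G Mod commutator_subgroup G);
               hh = \<lparr>carrier = cl, monoid.mult = class_add G,
                    one = seq_class G (sf (commutator_subgroup G))\<rparr>
           in cl \<subseteq> carrier (class_semigroup G)
              \<and> group hh
              \<and> (\<lambda>c. seq_class G (sf c)) \<in> iso (G Mod commutator_subgroup G) hh
              \<and> (\<forall>c \<in> carrier (G Mod commutator_subgroup G). \<forall>s \<in> seqs G.
                   seq_class G (s + sf c) \<in> cl)))
    \<and> (\<lambda>g. seq_class G {#g#}) \<in> iso (G\<lparr>carrier := grp_center G\<rparr>) (units_of (class_semigroup G))"
proof -
  interpret group G by fact
  have "\<forall>c \<in> carrier (G Mod commutator_subgroup G). \<exists>s \<in> seqs G. seq_prods G s = c"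
    using exists_seq_prods_eq_rcos[OF assms(2)] by (auto simp: carrier_FactGroup)
  with class_semigroup_section_subgroup seq_class_singleton_iso show ?thesis
    unfolding Let_def by (intro conjI allI impI) simp_all
qed

end
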